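(* For every $Q\subset\mathrm{EX}(M)$ and every $(\alpha,U)\in S_Q$, the restriction $q|_{N_{(\alpha,U)}}:N_{(\alpha,U)}\to q(N_{(\alpha,U)})$ is a homeomorphism onto its image.
   Context: Conventions: $M$ is an $n$-dimensional smooth manifold (Hausdorff, second countable) with maximal $C^\infty$ atlas $\mathcal{A}(M)$; every chart $\alpha$ has open domain $\mathrm{dom}(\alpha)\subset M$ and open range $\mathrm{ran}(\alpha)\subset\mathbb{R}^n$. For $A\subset\mathbb{R}^n$, $\partial A$ is its boundary in $\mathbb{R}^n$; for $A\subset U\subset\mathbb{R}^n$, $\partial_U A$ is the boundary of $A$ relative to $U$. An admissible boundary point of $\alpha$ is a $p\in\partial\,\mathrm{ran}(\alpha)$ such that every sequence $(x_i)\subset\mathrm{dom}(\alpha)$ with $\alpha(x_i)\to p$ has no accumulation point in $M$; $B(\alpha)$ is the set of these. An extension is a pair $(\alpha,U)$, $U\subset\mathbb{R}^n$ open, $\mathrm{ran}(\alpha)\subset U$, $\emptyset\ne\partial_U\mathrm{ran}(\alpha)\subset B(\alpha)$; $\mathrm{EX}(M)$ is the set of extensions. A boundary set is $(\alpha,U,V)$ with $(\alpha,U)\in\mathrm{EX}(M)$, $V\subset B(\alpha)\cap U$ (a boundary point if $V=\{p\}$). $(\alpha,U,V)$ covers $(\beta,X,Y)$ if for every sequence $(y_i)\subset\mathrm{dom}(\beta)$ with $(\beta(y_i))$ having an accumulation point in $Y$ there is a subsequence $(v_i)\subset\mathrm{dom}(\alpha)$ of $(y_i)$ with $(\alpha(v_i))$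 having an accumulation point in $V$; they are equivalent, $\equiv$, if each covers the other. Completion: for $Q\subset\mathrm{EX}(M)$ let $P=\{(\alpha,\mathrm{ran}(\alpha)):\alpha\in\mathcal{A}(M)\}$, $S_Q=P\cup Q$, $N_{(\alpha,U)}=\mathrm{ran}(\alpha)\cup\partial_U\mathrm{ran}(\alpha)$ with subspace topology of $\mathbb{R}^n$, $N_Q=\bigsqcup_{(\alpha,U)\in S_Q}N_{(\alpha,U)}$ with disjoint-union topology. Identify $x\in N_{(\alpha,U)}$ with $y\in N_{(\beta,X)}$ iff either $x\in\mathrm{ran}(\alpha)$, $y\in\mathrm{ran}(\beta)$, $\beta\circ\alpha^{-1}(x)=y$, or $x\in\partial_U\mathrm{ran}(\alpha)$, $y\in\partial_X\mathrm{ran}(\beta)$, $(\alpha,U,\{x\})\equiv(\beta,X,\{y\})$. $Q(M)$ is the quotient space with the quotient topology and $q:N_Q\to Q(M)$ the quotient map. *)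

theory Defs
  imports "HOL-Analysis.Analysis"
begin

text \<open>D vs is the iterated partial derivative along the
basis vectors listed in vs (the head being the last differentiation).\<close>
definition smooth_on :: "'a::euclidean_space set \<Rightarrow> ('a \<Rightarrow> 'b::real_normed_vector) \<Rightarrow> bool" where
  "smooth_on S f \<longleftrightarrow>
     (\<exists>D :: 'a list \<Rightarrow> 'a \<Rightarrow> 'b.
        (\<forall>x\<in>S. D [] x = f x) \<and>
        (\<forall>vs. \<forall>x\<in>S. (D vs has_derivative (\<lambda>h. \<Sum>b\<in>Basis. (h \<bullet> b) *\<^sub>R D (b # vs) x)) (at x)))"

text \<open>A chart on the manifold (the type 'm with its topology) modelled on the
Euclidean space 'e (= R^n, n = DIM('e)): a domain together with a map, taken
to be undefined outside its domain (i.e. a partial map).\<close>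
type_synonym ('m, 'e) chart = "'m set \<times> ('m \<Rightarrow> 'e)"

definition cdom :: "('m, 'e) chart \<Rightarrow> 'm set" where
  "cdom c = fst c"

definition cran :: "('m, 'e) chart \<Rightarrow> 'e set" where
  "cran c = snd c ` fst c"

definition cinv :: "('m, 'e) chart \<Rightarrow> 'e \<Rightarrow> 'm" where
  "cinv c = inv_into (fst c) (snd c)"

definition is_chart :: "('m::topological_space, 'e::euclidean_space) chart \<Rightarrow> bool" where
  "is_chart c \<longleftrightarrow> open (cdom c) \<and> open (cran c) \<and>
     (\<exists>g. homeomorphism (cdom c) (cran c) (snd c) g) \<and>
     (\<forall>x. x \<notin> cdom c \<longrightarrow> snd c x = undefined)"

definition smooth_compat :: "('m, 'e::euclidean_space) chart \<Rightarrow> ('m, 'e) chart \<Rightarrow> bool" where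
  "smooth_compat c1 c2 \<longleftrightarrow>
     smooth_on (snd c1 ` (cdom c1 \<inter> cdom c2)) (\<lambda>x. snd c2 (cinv c1 x))"

definition maximal_smooth_atlas :: "('m::topological_space, 'e::euclidean_space) chart set \<Rightarrow> bool" where
  "maximal_smooth_atlas A \<longleftrightarrow>
     (\<forall>c\<in>A. is_chart c) \<and>
     (\<Union>c\<in>A. cdom c) = UNIV \<and>
     (\<forall>c1\<in>A. \<forall>c2\<in>A. smooth_compat c1 c2) \<and>
     (\<forall>c. is_chart c \<and> (\<forall>c'\<in>A. smooth_compat c c' \<and> smooth_compat c' c) \<longrightarrow> c \<in> A)"

definition seq_accum :: "(nat \<Rightarrow> 'a::topological_space) \<Rightarrow> 'a \<Rightarrow> bool" where
  "seq_accum x p \<longleftrightarrow> (\<exists>r. strict_mono r \<and> (x \<circ> r) \<longlonglongrightarrow> p)"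

definition has_accum :: "(nat \<Rightarrow> 'a::topological_space) \<Rightarrow> bool" where
  "has_accum x \<longleftrightarrow> (\<exists>p. seq_accum x p)"

definition rel_bdry :: "'e::euclidean_space set \<Rightarrow> 'e set \<Rightarrow> 'e set" where
  "rel_bdry U S = (top_of_set U) frontier_of S"

definition admissible_bdry :: "('m::topological_space, 'e::euclidean_space) chart \<Rightarrow> 'e \<Rightarrow> bool" where
  "admissible_bdry c p \<longleftrightarrow> p \<in> frontier (cran c) \<and>
     (\<forall>x :: nat \<Rightarrow> 'm. (\<forall>i. x i \<in> cdom c) \<and> ((\<lambda>i. snd c (x i)) \<longlonglongrightarrow> p) \<longrightarrow> \<not> has_accum x)"

definition Bset :: "('m::topological_space, 'e::euclidean_space) chart \<Rightarrow> 'e set" where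
  "Bset c = {p. admissible_bdry c p}"

definition EXT :: "('m::topological_space, 'e::euclidean_space) chart set \<Rightarrow> (('m, 'e) chart \<times> 'e set) set" where
  "EXT A = {(c, U). c \<in> A \<and> open U \<and> cran c \<subseteq> U \<and>
            rel_bdry U (cran c) \<noteq> {} \<and> rel_bdry U (cran c) \<subseteq> Bset c}"

definition boundary_set :: "('m::topological_space, 'e::euclidean_space) chart set \<Rightarrow> ('m, 'e) chart \<Rightarrow> 'e set \<Rightarrow> 'e set \<Rightarrow> bool" where
  "boundary_set A c U V \<longleftrightarrow> (c, U) \<in> EXT A \<and> V \<subseteq> Bset c \<inter> U"

definition covers :: "('m::topological_space, 'e::euclidean_space) chart \<times> 'e set \<times> 'e set \<Rightarrow> ('m, 'e) chart \<times> 'e set \<times> 'e set \<Rightarrow> bool" where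
  "covers a b \<longleftrightarrow> (case a of (c, U, V) \<Rightarrow> case b of (d, X, Y) \<Rightarrow>
     (\<forall>y :: nat \<Rightarrow> 'm. (\<forall>i. y i \<in> cdom d) \<and> (\<exists>p\<in>Y. seq_accum (\<lambda>i. snd d (y i)) p) \<longrightarrow>
        (\<exists>r. strict_mono r \<and> (\<forall>i. y (r i) \<in> cdom c) \<and>
             (\<exists>p\<in>V. seq_accum (\<lambda>i. snd c (y (r i))) p))))"

definition bs_equiv :: "('m::topological_space, 'e::euclidean_space) chart \<times> 'e set \<times> 'e set \<Rightarrow> ('m, 'e) chart \<times> 'e set \<times> 'e set \<Rightarrow> bool" where
  "bs_equiv a b \<longleftrightarrow> covers a b \<and> covers b a"

definition quot_class :: "'a topology \<Rightarrow> ('a \<Rightarrow> 'a \<Rightarrow> bool) \<Rightarrow> 'a \<Rightarrow> 'a set" where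
  "quot_class X R z = {w \<in> topspace X. R z w}"

definition quot_open :: "'a topology \<Rightarrow> ('a \<Rightarrow> 'a \<Rightarrow> bool) \<Rightarrow> 'a set set \<Rightarrow> bool" where
  "quot_open X R W \<longleftrightarrow> W \<subseteq> quot_class X R ` topspace X \<and>
     openin X {z \<in> topspace X. quot_class X R z \<in> W}"

lemma istopology_quot_open: "istopology (quot_open X R)"
proof -
  have i: "quot_open X R (S \<inter> T)" if "quot_open X R S" "quot_open X R T" for S T
  proof -
    have "{z \<in> topspace X. quot_class X R z \<in> S \<inter> T} =
          {z \<in> topspace X. quot_class X R z \<in> S} \<inter> {z \<in> topspace X. quot_class X R z \<in> T}" by blast
    then show ?thesis using that unfolding quot_open_def by (auto simp: openin_Int)
  qed
  have u: "quot_open X R (\<Union>K)" if "\<forall>S\<in>K. quot_open X R S" for K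
  proof -
    have "{z \<in> topspace X. quot_class X R z \<in> \<Union>K} = (\<Union>S\<in>K. {z \<in> topspace X. quot_class X R z \<in> S})" by blast
    then show ?thesis using that unfolding quot_open_def by (auto intro!: openin_Union)
  qed
  show ?thesis unfolding istopology_def using i u by blast
qed

definition quotient_top :: "'a topology \<Rightarrow> ('a \<Rightarrow> 'a \<Rightarrow> bool) \<Rightarrow> 'a set topology" where
  "quotient_top X R = topology (quot_open X (equivclp R))"

definition quotient_map_of :: "'a topology \<Rightarrow> ('a \<Rightarrow> 'a \<Rightarrow> bool) \<Rightarrow> 'a \<Rightarrow> 'a set" where
  "quotient_map_of X R = quot_class X (equivclp R)"

definition Pset :: "('m::topological_space, 'e::euclidean_space) chart set \<Rightarrow> (('m, 'e) chart \<times> 'e set) set" where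
  "Pset A = {(c, cran c) | c. c \<in> A}"

definition SQ :: "('m::topological_space, 'e::euclidean_space) chart set \<Rightarrow> (('m, 'e) chart \<times> 'e set) set \<Rightarrow> (('m, 'e) chart \<times> 'e set) set" where
  "SQ A Q = Pset A \<union> Q"

definition Nset :: "('m, 'e::euclidean_space) chart \<times> 'e set \<Rightarrow> 'e set" where
  "Nset s = (case s of (c, U) \<Rightarrow> cran c \<union> rel_bdry U (cran c))"

definition NQ :: "('m::topological_space, 'e::euclidean_space) chart set \<Rightarrow> (('m, 'e) chart \<times> 'e set) set \<Rightarrow> ((('m, 'e) chart \<times> 'e set) \<times> 'e) topology" where
  "NQ A Q = sum_topology (\<lambda>s. top_of_set (Nset s)) (SQ A Q)"

definition ident :: "('m::topological_space, 'e::euclidean_space) chart set \<Rightarrow> (('m, 'e) chart \<times> 'e set) set \<Rightarrow>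
    (('m, 'e) chart \<times> 'e set) \<times> 'e \<Rightarrow> (('m, 'e) chart \<times> 'e set) \<times> 'e \<Rightarrow> bool" where
  "ident A Q z w \<longleftrightarrow> z \<in> topspace (NQ A Q) \<and> w \<in> topspace (NQ A Q) \<and>
     (case z of ((c, U), x) \<Rightarrow> case w of ((d, X), y) \<Rightarrow>
        (x \<in> cran c \<and> y \<in> cran d \<and> cinv c x \<in> cdom d \<and> snd d (cinv c x) = y) \<or>
        (x \<in> rel_bdry U (cran c) \<and> y \<in> rel_bdry X (cran d) \<and> bs_equiv (c, U, {x}) (d, X, {y})))"

definition QM :: "('m::topological_space, 'e::euclidean_space) chart set \<Rightarrow> (('m, 'e) chart \<times> 'e set) set \<Rightarrow> ((('m, 'e) chart \<times> 'e set) \<times> 'e) set topology" where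
  "QM A Q = quotient_top (NQ A Q) (ident A Q)"

definition qmap :: "('m::topological_space, 'e::euclidean_space) chart set \<Rightarrow> (('m, 'e) chart \<times> 'e set) set \<Rightarrow> (('m, 'e) chart \<times> 'e set) \<times> 'e \<Rightarrow> ((('m, 'e) chart \<times> 'e set) \<times> 'e) set" where
  "qmap A Q = quotient_map_of (NQ A Q) (ident A Q)"

end

theory Submission
  imports Defs
begin

text \<open>
  The proof rests on a single invariant of the identification: identified points track
  each other, i.e. every manifold sequence approaching one of them in its chart has a
  subsequence approaching the other in the other chart.  Tracking holds for identified interior
  points by continuity of the transition maps and for equivalent boundary points by the covering
  relation, and it is reflexive and transitive, so it survives the generated equivalence.

  Injectivity of q on a sheet follows at once, since within one chart tracking forces equality.
  For openness, an open V in the sheet N_0 is lifted to the set of points of N_Q whose nearby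
  points are only identified with points of a closed set K meeting N_0 inside V.  This set is
  open, meets N_0 in exactly V, and is saturated: control is transported along an identification
  to the interior chart points by tracking, and then to boundary points by closedness of K.  Its
  image is therefore open in Q(M), which makes the restriction of q an embedding.
\<close>

lemma rel_bdry_subset_closure: "rel_bdry U S \<subseteq> closure S"
  unfolding rel_bdry_def frontier_of_def
  using closure_mono[of "U \<inter> S" S] by (auto simp: closure_of_subtopology)

lemma cran_subset_Nset: "cran c \<subseteq> Nset (c, U)"
  by (simp add: Nset_def)

lemma Nset_subset_closure: "Nset (c, U) \<subseteq> closure (cran c)"
  using rel_bdry_subset_closure[of U "cran c"] closure_subset[of "cran c"] by (auto simp: Nset_def)

lemma chart_right_inverse: "x \<in> cran c \<Longrightarrow> cinv c x \<in> cdom c \<and> snd c (cinv c x) = x"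
  unfolding cinv_def cran_def cdom_def by (auto intro: inv_into_into f_inv_into_f)

lemma chart_image: "p \<in> cdom c \<Longrightarrow> snd c p \<in> cran c"
  unfolding cran_def cdom_def by auto

lemma chart_left_inverse:
  assumes "is_chart c" "p \<in> cdom c"
  shows "cinv c (snd c p) = p"
proof -
  obtain g where "homeomorphism (cdom c) (cran c) (snd c) g"
    using assms(1) by (auto simp: is_chart_def)
  then have "inj_on (snd c) (cdom c)"
    by (metis homeomorphism_apply1 inj_on_inverseI)
  then show ?thesis using assms(2) unfolding cinv_def cdom_def by simp
qed

lemma chart_continuous:
  assumes "is_chart c"
  shows "continuous_on (cdom c) (snd c)" "continuous_on (cran c) (cinv c)"
proof -
  obtain g where h: "homeomorphism (cdom c) (cran c) (snd c) g"
    using assms by (auto simp: is_chart_def)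
  then show "continuous_on (cdom c) (snd c)" by (simp add: homeomorphism_def)
  have "\<forall>x\<in>cran c. cinv c x = g x"
    using h chart_left_inverse[OF assms]
    by (metis homeomorphism_apply2 homeomorphism_image2 imageI)
  then show "continuous_on (cran c) (cinv c)"
    using h by (metis continuous_on_cong homeomorphism_def)
qed

definition approaches :: "('m::topological_space, 'e::euclidean_space) chart \<Rightarrow> 'e \<Rightarrow> (nat \<Rightarrow> 'm) \<Rightarrow> bool" where
  "approaches c x m \<longleftrightarrow> (\<forall>i. m i \<in> cdom c) \<and> (\<lambda>i. snd c (m i)) \<longlonglongrightarrow> x"

definition tracks :: "('m::topological_space, 'e::euclidean_space) chart \<Rightarrow> 'e \<Rightarrow> ('m, 'e) chart \<Rightarrow> 'e \<Rightarrow> bool" where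
  "tracks c x d y \<longleftrightarrow> (\<forall>m. approaches d y m \<longrightarrow> (\<exists>r. strict_mono r \<and> approaches c x (m \<circ> r)))"

lemma tracks_refl: "tracks c x c x"
  unfolding tracks_def by (metis strict_mono_id id_comp comp_id)

lemma tracks_trans:
  assumes "tracks c x d y" "tracks d y e z"
  shows "tracks c x e z"
  unfolding tracks_def
proof (intro allI impI)
  fix m assume "approaches e z m"
  then obtain r where r: "strict_mono r" "approaches d y (m \<circ> r)"
    using assms(2) unfolding tracks_def by blast
  then obtain r' where r': "strict_mono r'" "approaches c x (m \<circ> r \<circ> r')"
    using assms(1) unfolding tracks_def by blast
  show "\<exists>r. strict_mono r \<and> approaches c x (m \<circ> r)"
    using r r' strict_mono_o by (metis comp_assoc)
qed

text \<open>Equivalent boundary points track each other: this is the covering relation specialised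
  to singletons, with accumulation points replaced by limits of subsequences.\<close>
lemma covers_imp_tracks:
  assumes "covers (c, U, {x}) (d, X, {y})"
  shows "tracks c x d y"
  unfolding tracks_def
proof (intro allI impI)
  fix m assume m: "approaches d y m"
  then have "seq_accum (\<lambda>i. snd d (m i)) y"
    unfolding approaches_def seq_accum_def by (metis strict_mono_id comp_id)
  then obtain r where r: "strict_mono r" "\<forall>i. m (r i) \<in> cdom c"
    "seq_accum (\<lambda>i. snd c (m (r i))) x"
    using assms m unfolding covers_def approaches_def by auto
  then obtain r' where r': "strict_mono r'" "((\<lambda>i. snd c (m (r i))) \<circ> r') \<longlonglongrightarrow> x"
    unfolding seq_accum_def by blast
  have "approaches c x (m \<circ> (r \<circ> r'))"
    using r(2) r'(2) unfolding approaches_def by (simp add: o_def)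
  then show "\<exists>r. strict_mono r \<and> approaches c x (m \<circ> r)"
    using strict_mono_o[OF r(1) r'(1)] by blast
qed

lemma approaches_imp_tendsto:
  assumes "is_chart d" "p \<in> cdom d" "approaches d (snd d p) m"
  shows "m \<longlonglongrightarrow> p"
proof -
  have m: "\<forall>i. m i \<in> cdom d" "(\<lambda>i. snd d (m i)) \<longlonglongrightarrow> snd d p"
    using assms(3) unfolding approaches_def by auto
  have "(\<lambda>i. cinv d (snd d (m i))) \<longlonglongrightarrow> cinv d (snd d p)"
    using m(1) by (intro continuous_on_tendsto_compose[OF chart_continuous(2)[OF assms(1)] m(2)])
      (auto simp: chart_image assms(2))
  moreover have "(\<lambda>i. cinv d (snd d (m i))) = m"
    using m(1) chart_left_inverse[OF assms(1)] by auto
  ultimately show ?thesis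
    using chart_left_inverse[OF assms(1,2)] by simp
qed

lemma tendsto_imp_approaches:
  assumes "is_chart c" "p \<in> cdom c" "m \<longlonglongrightarrow> p"
  shows "\<exists>r. strict_mono r \<and> approaches c (snd c p) (m \<circ> r)"
proof -
  have "open (cdom c)" using assms(1) by (simp add: is_chart_def)
  then obtain N where N: "\<forall>i\<ge>N. m i \<in> cdom c"
    using topological_tendstoD[OF assms(3) _ assms(2)] unfolding eventually_sequentially by blast
  define r where "r i = i + N" for i
  have mr: "(m \<circ> r) \<longlonglongrightarrow> p" "\<forall>i. (m \<circ> r) i \<in> cdom c"
    using assms(3) N LIMSEQ_ignore_initial_segment[of m p N] by (auto simp: r_def o_def)
  have "(\<lambda>i. snd c ((m \<circ> r) i)) \<longlonglongrightarrow> snd c p"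
    using continuous_on_tendsto_compose[OF chart_continuous(1)[OF assms(1)] mr(1) assms(2)] mr(2)
    by simp
  moreover have "strict_mono r" by (simp add: r_def strict_mono_def)
  ultimately show ?thesis using mr(2) unfolding approaches_def by blast
qed

lemma chart_overlap_tracks:
  assumes "is_chart c" "is_chart d" "p \<in> cdom c" "p \<in> cdom d"
  shows "tracks c (snd c p) d (snd d p)"
  unfolding tracks_def
  using approaches_imp_tendsto[OF assms(2,4)] tendsto_imp_approaches[OF assms(1,3)] by blast

lemma approaching_sequence:
  assumes "x \<in> closure (cran c)" "open B" "x \<in> B"
  obtains m where "approaches c x m" "\<forall>i. snd c (m i) \<in> B"
proof -
  have "x \<in> closure (B \<inter> cran c)"
    by (rule subsetD[OF open_Int_closure_subset[OF assms(2)] IntI[OF assms(3,1)]])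
  then obtain a where a: "\<forall>i. a i \<in> B \<inter> cran c" "a \<longlonglongrightarrow> x"
    unfolding closure_sequential by blast
  have inv: "cinv c (a i) \<in> cdom c \<and> snd c (cinv c (a i)) = a i" for i
    using a(1) by (intro chart_right_inverse) blast
  have "approaches c x (\<lambda>i. cinv c (a i))" "\<forall>i. snd c (cinv c (a i)) \<in> B"
    using a inv unfolding approaches_def by simp_all
  then show ?thesis by (rule that)
qed

text \<open>Within a single chart, tracking determines the point: limits are unique.\<close>
lemma tracks_same_chart_eq:
  assumes "tracks c x c y" "y \<in> closure (cran c)"
  shows "x = y"
proof -
  obtain m where m: "approaches c y m"
    using approaching_sequence[OF assms(2) open_UNIV] by blast
  then obtain r where r: "strict_mono r" "approaches c x (m \<circ> r)"
    using assms(1) unfolding tracks_def by blast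
  have "(\<lambda>i. snd c (m (r i))) \<longlonglongrightarrow> y"
    using LIMSEQ_subseq_LIMSEQ[OF _ r(1)] m unfolding approaches_def by (auto simp: o_def)
  moreover have "(\<lambda>i. snd c (m (r i))) \<longlonglongrightarrow> x"
    using r(2) unfolding approaches_def by (simp add: o_def)
  ultimately show ?thesis using LIMSEQ_unique by blast
qed

lemma nbhd_from_sequences:
  fixes y :: "'a::metric_space"
  assumes "\<And>a. \<forall>n. a n \<in> S \<Longrightarrow> a \<longlonglongrightarrow> y \<Longrightarrow> \<exists>n. P (a n)"
  shows "\<exists>\<delta>>0. \<forall>x\<in>S. dist x y < \<delta> \<longrightarrow> P x"
proof (rule ccontr)
  assume "\<not> ?thesis"
  moreover have "inverse (real (Suc n)) > 0" for n by simp
  ultimately have "\<forall>n. \<exists>x. x \<in> S \<and> dist x y < inverse (real (Suc n)) \<and> \<not> P x"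
    by blast
  then obtain a where a: "\<forall>n. a n \<in> S \<and> dist (a n) y < inverse (real (Suc n)) \<and> \<not> P (a n)"
    by metis
  have "(\<lambda>n. dist (a n) y) \<longlonglongrightarrow> 0"
    by (rule Lim_null_comparison[OF always_eventually LIMSEQ_inverse_real_of_nat])
      (use a in \<open>auto intro: less_imp_le\<close>)
  then have "a \<longlonglongrightarrow> y" using tendsto_dist_iff by blast
  then show False using assms a by blast
qed

lemma openin_quotient_top: "openin (quotient_top X R) W \<longleftrightarrow> quot_open X (equivclp R) W"
  unfolding quotient_top_def by (simp add: istopology_quot_open)

lemma topspace_quotient_top: "topspace (quotient_top X R) = quotient_map_of X R ` topspace X"
proof
  show "topspace (quotient_top X R) \<subseteq> quotient_map_of X R ` topspace X"
    unfolding topspace_def[of "quotient_top X R"] openin_quotient_top quot_open_def quotient_map_of_def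
    by blast
  have "{z \<in> topspace X. quotient_map_of X R z \<in> quotient_map_of X R ` topspace X} = topspace X"
    by blast
  then have "openin (quotient_top X R) (quotient_map_of X R ` topspace X)"
    unfolding openin_quotient_top quot_open_def quotient_map_of_def by auto
  then show "quotient_map_of X R ` topspace X \<subseteq> topspace (quotient_top X R)"
    by (rule openin_subset)
qed

lemma continuous_quotient_map: "continuous_map X (quotient_top X R) (quotient_map_of X R)"
  unfolding continuous_map_def topspace_quotient_top openin_quotient_top quot_open_def
  by (auto simp: quotient_map_of_def)

lemma quotient_map_eq_iff:
  assumes "z \<in> topspace X" "w \<in> topspace X"
  shows "quotient_map_of X R z = quotient_map_of X R w \<longleftrightarrow> equivclp R z w"
proof
  assume "quotient_map_of X R z = quotient_map_of X R w"
  then have "w \<in> quot_class X (equivclp R) z"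
    using assms(2) by (simp add: quotient_map_of_def quot_class_def)
  then show "equivclp R z w" by (simp add: quot_class_def)
next
  assume "equivclp R z w"
  then show "quotient_map_of X R z = quotient_map_of X R w"
    unfolding quotient_map_of_def quot_class_def
    by (metis equivclp_sym equivclp_trans)
qed

lemma openin_quotient_image:
  assumes S: "openin X S" and sat: "\<And>z w. z \<in> S \<Longrightarrow> w \<in> topspace X \<Longrightarrow> equivclp R z w \<Longrightarrow> w \<in> S"
  shows "openin (quotient_top X R) (quotient_map_of X R ` S)"
proof -
  have SX: "S \<subseteq> topspace X" using openin_subset[OF S] .
  have "z \<in> S" if "z \<in> topspace X" "quotient_map_of X R z = quotient_map_of X R w" "w \<in> S" for z w
    using sat[OF that(3,1)] that quotient_map_eq_iff[of w X z R] SX by blast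
  then have "{z \<in> topspace X. quotient_map_of X R z \<in> quotient_map_of X R ` S} = S"
    using SX by blast
  then show ?thesis
    using S SX unfolding openin_quotient_top quot_open_def quotient_map_of_def by auto
qed

lemma embedding_from_open_traces:
  assumes f: "continuous_map X Y f" "inj_on f (topspace X)"
    and traces: "\<And>V. openin X V \<Longrightarrow> \<exists>W. openin Y W \<and> f ` V = W \<inter> f ` topspace X"
  shows "homeomorphic_map X (subtopology Y (f ` topspace X)) f"
proof (rule bijective_open_imp_homeomorphic_map)
  show "continuous_map X (subtopology Y (f ` topspace X)) f"
    using f(1) by (auto intro: continuous_map_into_subtopology)
  show "open_map X (subtopology Y (f ` topspace X)) f"
    unfolding open_map_def openin_subtopology using traces by blast
  show "f ` topspace X = topspace (subtopology Y (f ` topspace X))"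
    using f(1) continuous_map_image_subset_topspace by fastforce
qed (use f in auto)

text \<open>The setting of the completion: the charts of A and an admissible family Q of extensions.\<close>
locale completion_data =
  fixes A :: "('m::topological_space, 'e::euclidean_space) chart set"
    and Q :: "(('m, 'e) chart \<times> 'e set) set"
  assumes charts: "\<And>c. c \<in> A \<Longrightarrow> is_chart c"
    and Q_ext: "Q \<subseteq> EXT A"
begin

abbreviation eqv :: "(('m, 'e) chart \<times> 'e set) \<times> 'e \<Rightarrow> (('m, 'e) chart \<times> 'e set) \<times> 'e \<Rightarrow> bool" where
  "eqv \<equiv> equivclp (ident A Q)"

lemma sheet_is_chart: "(c, U) \<in> SQ A Q \<Longrightarrow> is_chart c"
  using Q_ext charts unfolding SQ_def Pset_def EXT_def by blast

lemma topspace_NQ: "topspace (NQ A Q) = Sigma (SQ A Q) Nset"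
  by (simp add: NQ_def o_def)

lemma interior_ident:
  assumes "(c, U) \<in> SQ A Q" "(d, X) \<in> SQ A Q" "p \<in> cdom c" "p \<in> cdom d"
  shows "ident A Q ((c, U), snd c p) ((d, X), snd d p)"
  using assms chart_image[OF assms(3)] chart_image[OF assms(4)]
    chart_left_inverse[OF sheet_is_chart[OF assms(1)] assms(3)]
    cran_subset_Nset[of c U] cran_subset_Nset[of d X]
  unfolding ident_def topspace_NQ by auto

lemma ident_tracks:
  assumes "ident A Q ((c, U), x) ((d, X), y)"
  shows "tracks c x d y \<and> tracks d y c x"
proof -
  have "(c, U) \<in> SQ A Q" "(d, X) \<in> SQ A Q"
    using assms unfolding ident_def topspace_NQ by auto
  then have ch: "is_chart c" "is_chart d" using sheet_is_chart by blast+
  from assms consider (interior) "x \<in> cran c" "cinv c x \<in> cdom d" "snd d (cinv c x) = y"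
    | (boundary) "bs_equiv (c, U, {x}) (d, X, {y})"
    unfolding ident_def by auto
  then show ?thesis
  proof cases
    case interior
    have p: "cinv c x \<in> cdom c" "snd c (cinv c x) = x"
      using chart_right_inverse[OF interior(1)] by auto
    show ?thesis
      using chart_overlap_tracks[OF ch p(1) interior(2)]
        chart_overlap_tracks[OF ch(2,1) interior(2) p(1)]
      unfolding p(2) interior(3) by blast
  next
    case boundary
    then show ?thesis unfolding bs_equiv_def using covers_imp_tracks by blast
  qed
qed

lemma eqv_tracks:
  assumes "eqv z w"
  shows "tracks (fst (fst z)) (snd z) (fst (fst w)) (snd w)"
proof -
  have "(symclp (ident A Q))\<^sup>*\<^sup>* z w" using assms by (simp add: equivclp_def)
  then show ?thesis
  proof (induction rule: rtranclp_induct)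
    case base
    show ?case by (rule tracks_refl)
  next
    case (step w w')
    obtain c U x d X y where ww: "w = ((c, U), x)" "w' = ((d, X), y)"
      by (metis prod.collapse)
    have "tracks c x d y"
      using step.hyps(2) ident_tracks unfolding ww symclp_def by blast
    then show ?case using tracks_trans[OF step.IH[unfolded ww]] unfolding ww by simp
  qed
qed

lemma eqv_topspace:
  assumes "eqv z w" "z \<in> topspace (NQ A Q)"
  shows "w \<in> topspace (NQ A Q)"
proof -
  have "(symclp (ident A Q))\<^sup>*\<^sup>* z w" using assms(1) by (simp add: equivclp_def)
  then show ?thesis
    by (induction rule: rtranclp_induct) (use assms(2) in \<open>auto simp: symclp_def ident_def\<close>)
qed

lemma eqv_within_sheet:
  assumes "(c, U) \<in> SQ A Q" "y \<in> Nset (c, U)" "eqv ((c, U), x) ((c, U), y)"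
  shows "x = y"
  using tracks_same_chart_eq eqv_tracks[OF assms(3)] Nset_subset_closure assms(2) by fastforce

lemma sheet_map_inj:
  assumes "(c, U) \<in> SQ A Q" "x \<in> Nset (c, U)" "y \<in> Nset (c, U)"
    and "qmap A Q ((c, U), x) = qmap A Q ((c, U), y)"
  shows "x = y"
proof -
  have "eqv ((c, U), x) ((c, U), y)"
    using assms quotient_map_eq_iff[of "((c, U), x)" "NQ A Q" "((c, U), y)" "ident A Q"]
    unfolding qmap_def topspace_NQ by auto
  then show ?thesis using eqv_within_sheet assms(1,3) by blast
qed

end

locale completion_sheet = completion_data A Q
  for A :: "('m::topological_space, 'e::euclidean_space) chart set"
    and Q :: "(('m, 'e) chart \<times> 'e set) set" +
  fixes c0 :: "('m, 'e) chart" and U0 :: "'e set"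
  assumes sheet: "(c0, U0) \<in> SQ A Q"
begin

definition controlled :: "'e set \<Rightarrow> real \<Rightarrow> (('m, 'e) chart \<times> 'e set) \<times> 'e \<Rightarrow> bool" where
  "controlled K \<delta> z \<longleftrightarrow> (\<forall>y\<in>Nset (fst z). dist y (snd z) < \<delta> \<longrightarrow>
     (\<forall>x\<in>Nset (c0, U0). eqv (fst z, y) ((c0, U0), x) \<longrightarrow> x \<in> K))"

definition lift_open :: "'e set \<Rightarrow> ((('m, 'e) chart \<times> 'e set) \<times> 'e) set" where
  "lift_open V = {z \<in> topspace (NQ A Q).
     \<exists>K \<delta>. closed K \<and> K \<inter> Nset (c0, U0) \<subseteq> V \<and> \<delta> > 0 \<and> controlled K \<delta> z}"

lemma controlled_shrink:
  assumes "controlled K \<delta> (t, x)" "dist x' x < \<delta> / 2"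
  shows "controlled K (\<delta> / 2) (t, x')"
  unfolding controlled_def
proof (intro ballI impI)
  fix y x'' assume y: "y \<in> Nset (fst (t, x'))" "dist y (snd (t, x')) < \<delta> / 2"
    and x'': "x'' \<in> Nset (c0, U0)" "eqv (fst (t, x'), y) ((c0, U0), x'')"
  have "dist y x < \<delta>"
    using y(2) assms(2) dist_triangle[of y x x'] by simp
  then show "x'' \<in> K"
    using assms(1) y(1) x'' unfolding controlled_def by auto
qed

lemma lift_open_open: "openin (NQ A Q) (lift_open V)"
  unfolding NQ_def openin_sum_topology
proof (intro conjI ballI)
  show "lift_open V \<subseteq> Sigma (SQ A Q) (topspace \<circ> (\<lambda>s. top_of_set (Nset s)))"
    using topspace_NQ unfolding lift_open_def by (auto simp: o_def)
  fix t assume t: "t \<in> SQ A Q"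
  show "openin (top_of_set (Nset t)) {x. (t, x) \<in> lift_open V}"
    unfolding openin_euclidean_subtopology_iff
  proof (intro conjI ballI)
    show "{x. (t, x) \<in> lift_open V} \<subseteq> Nset t"
      using topspace_NQ unfolding lift_open_def by auto
    fix x assume "x \<in> {x. (t, x) \<in> lift_open V}"
    then obtain K \<delta> where K: "closed K" "K \<inter> Nset (c0, U0) \<subseteq> V" "\<delta> > 0" "controlled K \<delta> (t, x)"
      unfolding lift_open_def by auto
    have "(t, x') \<in> lift_open V" if "x' \<in> Nset t" "dist x' x < \<delta> / 2" for x'
      using K controlled_shrink[OF K(4) that(2)] t that(1) topspace_NQ
      unfolding lift_open_def by (auto intro!: exI[of _ K] exI[of _ "\<delta> / 2"])
    then show "\<exists>e>0. \<forall>x'\<in>Nset t. dist x' x < e \<longrightarrow> x' \<in> {x. (t, x) \<in> lift_open V}"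
      using K(3) by (intro exI[of _ "\<delta> / 2"]) auto
  qed
qed


text \<open>If z is controlled and identified with w = ((e,Z),y), then all chart points of e near y are
  controlled: sequences approaching y in e are tracked back to points of the sheet of z.\<close>
lemma control_transfers:
  assumes eq: "eqv ((d, X), y) ((e, Z), y')" and ctl: "controlled K \<delta> ((d, X), y)" "\<delta> > 0"
    and sheets: "(d, X) \<in> SQ A Q" "(e, Z) \<in> SQ A Q"
  shows "\<exists>\<delta>'>0. \<forall>a\<in>cran e. dist a y' < \<delta>' \<longrightarrow>
           (\<forall>x\<in>Nset (c0, U0). eqv ((e, Z), a) ((c0, U0), x) \<longrightarrow> x \<in> K)"
proof -
  define near where "near a \<longleftrightarrow> (\<exists>b\<in>cran d. dist b y < \<delta> \<and> ident A Q ((e, Z), a) ((d, X), b))" for a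
  have tr: "tracks d y e y'" using eqv_tracks[OF eq] by simp
  have "\<exists>n. near (a n)" if a: "\<forall>n. a n \<in> cran e" "a \<longlonglongrightarrow> y'" for a
  proof -
    define m where "m i = cinv e (a i)" for i
    have m: "m i \<in> cdom e" "snd e (m i) = a i" for i
      using chart_right_inverse[of "a i" e] a(1) unfolding m_def by auto
    then have "approaches e y' m" using a(2) unfolding approaches_def by simp
    then obtain r where r: "strict_mono r" "approaches d y (m \<circ> r)"
      using tr unfolding tracks_def by blast
    then have "(\<lambda>i. snd d (m (r i))) \<longlonglongrightarrow> y" unfolding approaches_def by (simp add: o_def)
    from tendstoD[OF this ctl(2)] obtain N where N: "dist (snd d (m (r N))) y < \<delta>"
      unfolding eventually_sequentially by blast
    have mN: "m (r N) \<in> cdom d" using r(2) unfolding approaches_def by simp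
    have "ident A Q ((e, Z), a (r N)) ((d, X), snd d (m (r N)))"
      using interior_ident[OF sheets(2,1) m(1) mN] unfolding m(2) .
    then show ?thesis using N chart_image[OF mN] unfolding near_def by blast
  qed
  from nbhd_from_sequences[of "cran e" y' near, OF this]
  obtain \<delta>' where \<delta>': "\<delta>' > 0" "\<forall>a\<in>cran e. dist a y' < \<delta>' \<longrightarrow> near a"
    by blast
  have "x \<in> K" if a: "a \<in> cran e" "dist a y' < \<delta>'"
    and x: "x \<in> Nset (c0, U0)" "eqv ((e, Z), a) ((c0, U0), x)" for a x
  proof -
    obtain b where b: "b \<in> cran d" "dist b y < \<delta>" "ident A Q ((e, Z), a) ((d, X), b)"
      using \<delta>'(2) a unfolding near_def by blast
    have "eqv ((d, X), b) ((c0, U0), x)"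
      using equivclp_trans[OF equivclp_sym[OF r_into_equivclp[of "ident A Q", OF b(3)]] x(2)] .
    then show ?thesis
      using ctl(1) b(1,2) x(1) cran_subset_Nset[of d X] unfolding controlled_def by auto
  qed
  then show ?thesis using \<delta>'(1) by blast
qed

text \<open>Control over the chart points near y extends to the whole sheet near y, including its
  boundary points, because K is closed and boundary points are limits of tracked sequences.\<close>
lemma control_from_interior:
  assumes sheet_e: "(e, Z) \<in> SQ A Q" and K: "closed K"
    and interior: "\<forall>a\<in>cran e. dist a y' < \<delta> \<longrightarrow>
           (\<forall>x\<in>Nset (c0, U0). eqv ((e, Z), a) ((c0, U0), x) \<longrightarrow> x \<in> K)"
  shows "controlled K \<delta> ((e, Z), y')"
  unfolding controlled_def fst_conv snd_conv
proof (intro ballI impI)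
  fix y x assume y: "y \<in> Nset (e, Z)" "dist y y' < \<delta>"
    and x: "x \<in> Nset (c0, U0)" "eqv ((e, Z), y) ((c0, U0), x)"
  have tr: "tracks c0 x e y" using eqv_tracks[OF equivclp_sym[OF x(2)]] by simp
  have "y \<in> ball y' \<delta>" using y(2) by (simp add: dist_commute)
  then obtain m where m: "approaches e y m" "\<forall>i. snd e (m i) \<in> ball y' \<delta>"
    using approaching_sequence[OF subsetD[OF Nset_subset_closure y(1)] open_ball] by blast
  then obtain r where r: "strict_mono r" "approaches c0 x (m \<circ> r)"
    using tr unfolding tracks_def by blast
  have "snd c0 (m (r i)) \<in> K" for i
  proof -
    have p: "m (r i) \<in> cdom e" "m (r i) \<in> cdom c0"
      using m(1) r(2) unfolding approaches_def by auto
    have "eqv ((e, Z), snd e (m (r i))) ((c0, U0), snd c0 (m (r i)))"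
      using interior_ident[OF sheet_e sheet p] by blast
    moreover have "snd c0 (m (r i)) \<in> Nset (c0, U0)"
      using chart_image[OF p(2)] cran_subset_Nset by blast
    moreover have "dist (snd e (m (r i))) y' < \<delta>"
      using m(2) by (simp add: dist_commute)
    ultimately show ?thesis using interior chart_image[OF p(1)] by blast
  qed
  moreover have "(\<lambda>i. snd c0 (m (r i))) \<longlonglongrightarrow> x"
    using r(2) unfolding approaches_def by (simp add: o_def)
  ultimately show "x \<in> K" using closed_sequentially[OF K, of "\<lambda>i. snd c0 (m (r i))" x] by blast
qed

lemma lift_open_saturated:
  assumes z: "z \<in> lift_open V" and eq: "eqv z w"
  shows "w \<in> lift_open V"
proof -
  obtain d X y e Z y' where zw: "z = ((d, X), y)" "w = ((e, Z), y')"
    by (metis prod.collapse)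
  have zt: "z \<in> topspace (NQ A Q)" using z unfolding lift_open_def by blast
  have wt: "w \<in> topspace (NQ A Q)" using eqv_topspace[OF eq zt] .
  have sheets: "(d, X) \<in> SQ A Q" "(e, Z) \<in> SQ A Q"
    using zt wt unfolding zw topspace_NQ by auto
  obtain K \<delta> where K: "closed K" "K \<inter> Nset (c0, U0) \<subseteq> V" "\<delta> > 0" "controlled K \<delta> z"
    using z unfolding lift_open_def by blast
  obtain \<delta>' where "\<delta>' > 0" "\<forall>a\<in>cran e. dist a y' < \<delta>' \<longrightarrow>
      (\<forall>x\<in>Nset (c0, U0). eqv ((e, Z), a) ((c0, U0), x) \<longrightarrow> x \<in> K)"
    using control_transfers[OF eq[unfolded zw] K(4)[unfolded zw] K(3) sheets] by blast
  then have "controlled K \<delta>' w"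
    unfolding zw using control_from_interior[OF sheets(2) K(1)] by blast
  then show ?thesis
    using wt K(1,2) \<open>\<delta>' > 0\<close> unfolding lift_open_def by blast
qed

lemma lift_open_trace:
  assumes V: "openin (top_of_set (Nset (c0, U0))) V" and x: "x \<in> Nset (c0, U0)"
  shows "((c0, U0), x) \<in> lift_open V \<longleftrightarrow> x \<in> V"
proof
  assume "((c0, U0), x) \<in> lift_open V"
  then obtain K \<delta> where K: "K \<inter> Nset (c0, U0) \<subseteq> V" "\<delta> > 0" "controlled K \<delta> ((c0, U0), x)"
    unfolding lift_open_def by blast
  then have "x \<in> K" using x unfolding controlled_def by auto
  then show "x \<in> V" using K(1) x by blast
next
  assume "x \<in> V"
  then obtain \<epsilon> where \<epsilon>: "\<epsilon> > 0" "\<forall>x'\<in>Nset (c0, U0). dist x' x < \<epsilon> \<longrightarrow> x' \<in> V"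
    using V unfolding openin_euclidean_subtopology_iff by blast
  have "controlled (cball x (\<epsilon> / 2)) (\<epsilon> / 2) ((c0, U0), x)"
    unfolding controlled_def fst_conv snd_conv
  proof (intro ballI impI)
    fix y x'' assume "y \<in> Nset (c0, U0)" "dist y x < \<epsilon> / 2"
      "x'' \<in> Nset (c0, U0)" "eqv ((c0, U0), y) ((c0, U0), x'')"
    then show "x'' \<in> cball x (\<epsilon> / 2)"
      using eqv_within_sheet[OF sheet] by (fastforce simp: dist_commute)
  qed
  moreover have "cball x (\<epsilon> / 2) \<inter> Nset (c0, U0) \<subseteq> V"
    using \<epsilon> by (auto simp: dist_commute)
  moreover have "((c0, U0), x) \<in> topspace (NQ A Q)"
    using sheet x topspace_NQ by auto
  ultimately show "((c0, U0), x) \<in> lift_open V"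
    unfolding lift_open_def using \<epsilon>(1)
    by (intro CollectI conjI exI[of _ "cball x (\<epsilon> / 2)"] exI[of _ "\<epsilon> / 2"]) auto
qed


lemma sheet_map_open_traces:
  assumes V: "openin (top_of_set (Nset (c0, U0))) V"
  shows "\<exists>W. openin (QM A Q) W \<and>
           (\<lambda>x. qmap A Q ((c0, U0), x)) ` V = W \<inter> (\<lambda>x. qmap A Q ((c0, U0), x)) ` Nset (c0, U0)"
proof (intro exI conjI)
  let ?W = "qmap A Q ` lift_open V"
  have lift_top: "lift_open V \<subseteq> topspace (NQ A Q)" unfolding lift_open_def by blast
  have sheet_top: "((c0, U0), x) \<in> topspace (NQ A Q)" if "x \<in> Nset (c0, U0)" for x
    using sheet that topspace_NQ by auto
  show "openin (QM A Q) ?W"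
    unfolding QM_def qmap_def
    using openin_quotient_image[OF lift_open_open] lift_open_saturated by blast
  have VN: "V \<subseteq> Nset (c0, U0)" using openin_subset[OF V] by simp
  show "(\<lambda>x. qmap A Q ((c0, U0), x)) ` V = ?W \<inter> (\<lambda>x. qmap A Q ((c0, U0), x)) ` Nset (c0, U0)"
  proof
    show "(\<lambda>x. qmap A Q ((c0, U0), x)) ` V \<subseteq> ?W \<inter> (\<lambda>x. qmap A Q ((c0, U0), x)) ` Nset (c0, U0)"
      using lift_open_trace[OF V] VN by blast
  next
    show "?W \<inter> (\<lambda>x. qmap A Q ((c0, U0), x)) ` Nset (c0, U0) \<subseteq> (\<lambda>x. qmap A Q ((c0, U0), x)) ` V"
    proof
      fix q assume "q \<in> ?W \<inter> (\<lambda>x. qmap A Q ((c0, U0), x)) ` Nset (c0, U0)"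
      then obtain w x where w: "w \<in> lift_open V" and x: "x \<in> Nset (c0, U0)"
        and q: "q = qmap A Q w" "q = qmap A Q ((c0, U0), x)"
        by blast
      have "eqv w ((c0, U0), x)"
        using quotient_map_eq_iff[OF subsetD[OF lift_top w] sheet_top[OF x], of "ident A Q"] q
        unfolding qmap_def by simp
      then have "x \<in> V"
        using lift_open_saturated[OF w] lift_open_trace[OF V x] by blast
      then show "q \<in> (\<lambda>x. qmap A Q ((c0, U0), x)) ` V" using q(2) by blast
    qed
  qed
qed

theorem sheet_embedding:
  "homeomorphic_map (top_of_set (Nset (c0, U0)))
     (subtopology (QM A Q) ((\<lambda>x. qmap A Q ((c0, U0), x)) ` Nset (c0, U0)))
     (\<lambda>x. qmap A Q ((c0, U0), x))"
proof -
  have "continuous_map (top_of_set (Nset (c0, U0))) (NQ A Q) (\<lambda>x. ((c0, U0), x))"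
    using continuous_map_component_injection[OF sheet, of "\<lambda>s. top_of_set (Nset s)"]
    unfolding NQ_def by simp
  then have "continuous_map (top_of_set (Nset (c0, U0))) (QM A Q) (\<lambda>x. qmap A Q ((c0, U0), x))"
    using continuous_map_compose[OF _ continuous_quotient_map]
    unfolding QM_def qmap_def o_def by blast
  moreover have "inj_on (\<lambda>x. qmap A Q ((c0, U0), x)) (Nset (c0, U0))"
    using sheet_map_inj[OF sheet] by (auto intro: inj_onI)
  ultimately show ?thesis
    using embedding_from_open_traces[of "top_of_set (Nset (c0, U0))"] sheet_map_open_traces
    by (metis topspace_euclidean_subtopology)
qed

end

theorem mainTheorem16:
  fixes A :: "('m::{t2_space, second_countable_topology}, 'e::euclidean_space) chart set"
    and Q :: "(('m, 'e) chart \<times> 'e set) set"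
    and s :: "('m, 'e) chart \<times> 'e set"
  assumes "maximal_smooth_atlas A"
    and "Q \<subseteq> EXT A"
    and "s \<in> SQ A Q"
  shows "homeomorphic_map (top_of_set (Nset s))
           (subtopology (QM A Q) ((\<lambda>x. qmap A Q (s, x)) ` Nset s))
           (\<lambda>x. qmap A Q (s, x))"
proof -
  obtain c0 U0 where s: "s = (c0, U0)" by (cases s)
  have "completion_sheet A Q c0 U0"
    using assms unfolding s maximal_smooth_atlas_def
    by unfold_locales auto
  then show ?thesis unfolding s by (rule completion_sheet.sheet_embedding)
qed

end
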